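(* Let $\mathbf{T}\subset\mathbb{S}^3$ be a $\mathbb{Z}_2$-symmetric spherical tetrahedron with dihedral angles $A$, $B=E$, $C=F$, $D$ and edge lengths $l_A$, $l_B=l_E$, $l_C=l_F$, $l_D$. Put $a_+=\cos\frac{l_A+l_D}{2}$, $a_-=\cos\frac{l_A-l_D}{2}$, $b=\cos l_B$, $c=\cos l_C$, $$\Delta^\star=(a_++a_-+b+c)(a_++a_--b-c)(a_+-a_--b+c)(a_+-a_-+b-c),\qquad t^2=\frac{4\,(a_+a_--bc)(a_+b-a_-c)(a_+c-a_-b)}{\Delta^\star},$$ and let $s^\star_{ij}$ ($i,j=0,1,2,3$) be the $(i,j)$-cofactors of the matrix $$G^\star_s=\begin{pmatrix}1&\frac{a_+}{a_-}&\frac{b}{a_-}&\frac{c}{a_-}\\\frac{a_+}{a_-}&1&\frac{c}{a_-}&\frac{b}{a_-}\\\frac{b}{a_-}&\frac{c}{a_-}&1&\frac{a_+}{a_-}\\\frac{c}{a_-}&\frac{b}{a_-}&\frac{a_+}{a_-}&1\end{pmatrix}.$$ Then (i) $a_-^2-t^2=a_-^6\,(s^\star_{00})^2/\Delta^\star$; (ii) $a_+^2-t^2=a_-^6\,(s^\star_{01})^2/\Delta^\star$; (iii) $b^2-t^2=a_-^6\,(s^\star_{02})^2/\Delta^\star$; (iv) $c^2-t^2=a_-^6\,(s^\star_{03})^2/\Delta^\star$.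
   Context: A spherical tetrahedron $\mathbf{T}\subset\mathbb{S}^3\subset\mathbb{R}^4$ is the intersection of $\mathbb{S}^3$ with the cone over four linearly independent unit vectors $\mathrm{p}_0,\dots,\mathrm{p}_3$. Edge lengths $l_{ij}\in[0,\pi]$: $\cos l_{ij}=\langle\mathrm{p}_i,\mathrm{p}_j\rangle$; dihedral angles $\alpha_{ij}\in[0,\pi]$: $\cos\alpha_{ij}=-\langle\mathrm{v}_i,\mathrm{v}_j\rangle$ with $\mathrm{v}_i$ the outer unit normal of the face opposite $\mathrm{p}_i$. Notation: $l_A=l_{01}$, $l_B=l_{02}$, $l_C=l_{03}$, $l_D=l_{23}$, $l_E=l_{13}$, $l_F=l_{12}$; $A,\dots,F$ are the dihedral angles along the edges of lengths $l_A,\dots,l_F$. $\mathbf{T}$ is $\mathbb{Z}_2$-symmetric if invariant under rotation through $\pi$ about the axis through the midpoints of the edges $\mathrm{p}_0\mathrm{p}_1$ and $\mathrm{p}_2\mathrm{p}_3$ (so $l_B=l_E$, $l_C=l_F$, $B=E$, $C=F$). The $(i,j)$-cofactor of a matrix is $(-1)^{i+j}$ times the determinant of the matrix with row $i$ and column $j$ deleted. *)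

theory Defs
  imports "HOL-Analysis.Analysis"
begin

text \<open>Square matrices of size n represented as functions nat => nat => real
  (only entries with indices < n matter).\<close>

definition ndet :: "nat \<Rightarrow> (nat \<Rightarrow> nat \<Rightarrow> real) \<Rightarrow> real" where
  "ndet n A = (\<Sum>\<sigma> | \<sigma> permutes {..<n}. of_int (sign \<sigma>) * (\<Prod>i<n. A i (\<sigma> i)))"

definition del_rc :: "nat \<Rightarrow> nat \<Rightarrow> (nat \<Rightarrow> nat \<Rightarrow> real) \<Rightarrow> nat \<Rightarrow> nat \<Rightarrow> real" where
  "del_rc i j A = (\<lambda>k l. A (if k < i then k else Suc k) (if l < j then l else Suc l))"

definition ncofactor :: "nat \<Rightarrow> (nat \<Rightarrow> nat \<Rightarrow> real) \<Rightarrow> nat \<Rightarrow> nat \<Rightarrow> real" where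
  "ncofactor n A i j = (-1) ^ (i + j) * ndet (n - 1) (del_rc i j A)"

definition spherical_tetrahedron :: "(nat \<Rightarrow> real^4) \<Rightarrow> bool" where
  "spherical_tetrahedron p \<longleftrightarrow> (\<forall>i<4. norm (p i) = 1) \<and> inj_on p {..<4} \<and> independent (p ` {..<4})"

definition edge_len :: "(nat \<Rightarrow> real^4) \<Rightarrow> nat \<Rightarrow> nat \<Rightarrow> real" where
  "edge_len p i j = arccos (p i \<bullet> p j)"

text \<open>Z2-symmetry: invariance under the rotation through pi of R^4 that swaps
  p0 <-> p1 and p2 <-> p3 (i.e. the half-turn about the great circle through the
  midpoints of edges p0p1 and p2p3). An orthogonal map with these vertex images
  is exactly that half-turn.\<close>
definition Z2_symmetric :: "(nat \<Rightarrow> real^4) \<Rightarrow> bool" where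
  "Z2_symmetric p \<longleftrightarrow> (\<exists>f. orthogonal_transformation f \<and>
      f (p 0) = p 1 \<and> f (p 1) = p 0 \<and> f (p 2) = p 3 \<and> f (p 3) = p 2)"

definition Gs :: "real \<Rightarrow> real \<Rightarrow> real \<Rightarrow> real \<Rightarrow> nat \<Rightarrow> nat \<Rightarrow> real" where
  "Gs ap am b c = (\<lambda>i j.
     [[1, ap/am, b/am, c/am],
      [ap/am, 1, c/am, b/am],
      [b/am, c/am, 1, ap/am],
      [c/am, b/am, ap/am, 1]] ! i ! j)"

end

theory Submission imports Defs begin

text \<open>The identities are polynomial once the denominators of \<open>G\<^sup>\<star>\<^sub>s\<close> are cleared: with
  \<open>N = 4 (a\<^sub>+a\<^sub>- - bc)(a\<^sub>+b - a\<^sub>-c)(a\<^sub>+c - a\<^sub>-b)\<close>, each of \<open>v\<^sup>2\<Delta>\<^sup>\<star> - N\<close> for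
  \<open>v = a\<^sub>-, a\<^sub>+, b, c\<close> is the square of the corresponding first-row cofactor of \<open>a\<^sub>- G\<^sup>\<star>\<^sub>s\<close>.
  The geometry only has to guarantee that the divisions are honest, i.e. \<open>a\<^sub>- \<noteq> 0\<close> and
  \<open>\<Delta>\<^sup>\<star> \<noteq> 0\<close>. The half-angle formulas give \<open>(1 \<plusminus> cos l\<^sub>A)(1 \<plusminus> cos l\<^sub>D) = (a\<^sub>+ \<plusminus> a\<^sub>-)\<^sup>2\<close>
  and the symmetry gives \<open>\<langle>p\<^sub>0 \<plusminus> p\<^sub>1, p\<^sub>2 \<plusminus> p\<^sub>3\<rangle> = 2(b \<plusminus> c)\<close>, so the two factors of
  \<open>\<Delta>\<^sup>\<star> = ((a\<^sub>+ + a\<^sub>-)\<^sup>2 - (b + c)\<^sup>2)((a\<^sub>+ - a\<^sub>-)\<^sup>2 - (b - c)\<^sup>2)\<close> are, up to a factor 4,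
  Cauchy--Schwarz defects of the independent pairs \<open>p\<^sub>0 \<plusminus> p\<^sub>1, p\<^sub>2 \<plusminus> p\<^sub>3\<close>, hence nonzero.\<close>

lemma ndet_cong:
  assumes "\<And>i j. i < n \<Longrightarrow> j < n \<Longrightarrow> A i j = B i j"
  shows "ndet n A = ndet n B"
  unfolding ndet_def
proof (intro sum.cong prod.cong refl arg_cong2[where f = "(*)"] assms)
  fix \<sigma> i assume "\<sigma> \<in> {\<sigma>. \<sigma> permutes {..<n}}" and "i \<in> {..<n}"
  then show "i < n" and "\<sigma> i < n"
    using permutes_in_image[of \<sigma> "{..<n}" i] by auto
qed

lemma ndet_scale: "ndet n (\<lambda>i j. t * A i j) = t ^ n * ndet n A"
  by (simp add: ndet_def prod.distrib sum_distrib_left algebra_simps)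

lemma ndet_3:
  "ndet 3 A = A 0 0 * A 1 1 * A 2 2 + A 0 1 * A 1 2 * A 2 0 + A 0 2 * A 1 0 * A 2 1
     - A 0 0 * A 1 2 * A 2 1 - A 0 1 * A 1 0 * A 2 2 - A 0 2 * A 1 1 * A 2 0"
proof -
  have indices: "{..<3::nat} = insert 0 (insert 1 {2})" by auto
  have prod_3: "(\<Prod>i<(3::nat). f i) = f 0 * f 1 * (f 2 :: real)" for f
    by (simp add: numeral_3_eq_3 numeral_2_eq_2 lessThan_Suc)
  show ?thesis
    unfolding ndet_def prod_3 indices
    by (simp add: sum_over_permutations_insert permutes_sing sign_swap_id permutation_swap_id
        sign_compose swap_id_eq algebra_simps)
qed

lemma ncofactor_cong:
  assumes "\<And>k l. k < n \<Longrightarrow> l < n \<Longrightarrow> A k l = B k l" and "i < n" and "j < n"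
  shows "ncofactor n A i j = ncofactor n B i j"
  unfolding ncofactor_def del_rc_def
  by (intro arg_cong2[where f = "(*)"] refl ndet_cong assms) auto

lemma ncofactor_scale: "ncofactor n (\<lambda>i j. t * A i j) i j = t ^ (n - 1) * ncofactor n A i j"
  by (simp add: ncofactor_def del_rc_def ndet_scale[where A = "del_rc i j A", unfolded del_rc_def])

definition Gs_numer :: "real \<Rightarrow> real \<Rightarrow> real \<Rightarrow> real \<Rightarrow> nat \<Rightarrow> nat \<Rightarrow> real" where
  "Gs_numer ap am b c = (\<lambda>i j.
     [[am, ap, b, c],
      [ap, am, c, b],
      [b, c, am, ap],
      [c, b, ap, am]] ! i ! j)"

lemma Gs_eq_scaled_Gs_numer:
  "am \<noteq> 0 \<Longrightarrow> i < 4 \<Longrightarrow> j < 4 \<Longrightarrow> Gs ap am b c i j = (1 / am) * Gs_numer ap am b c i j"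
  by (auto simp: Gs_def Gs_numer_def less_Suc_eq numeral_eq_Suc)

lemma ncofactor_Gs:
  assumes "am \<noteq> 0" and "j < 4"
  shows "am ^ 3 * ncofactor 4 (Gs ap am b c) 0 j = ncofactor 4 (Gs_numer ap am b c) 0 j"
proof -
  have "ncofactor 4 (Gs ap am b c) 0 j = ncofactor 4 (\<lambda>k l. (1 / am) * Gs_numer ap am b c k l) 0 j"
    using assms by (intro ncofactor_cong Gs_eq_scaled_Gs_numer) auto
  also have "\<dots> = (1 / am) ^ 3 * ncofactor 4 (Gs_numer ap am b c) 0 j"
    by (rule ncofactor_scale[where n = 4, simplified])
  finally show ?thesis
    using assms(1) by (simp add: power_one_over)
qed

lemma Gs_numer_cofactor_squares:
  fixes ap am b c :: real
  defines "\<Delta> \<equiv> (ap + am + b + c) * (ap + am - b - c) * (ap - am - b + c) * (ap - am + b - c)"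
    and "N \<equiv> 4 * (ap * am - b * c) * (ap * b - am * c) * (ap * c - am * b)"
  shows "am\<^sup>2 * \<Delta> - N = (ncofactor 4 (Gs_numer ap am b c) 0 0)\<^sup>2"
    and "ap\<^sup>2 * \<Delta> - N = (ncofactor 4 (Gs_numer ap am b c) 0 1)\<^sup>2"
    and "b\<^sup>2 * \<Delta> - N = (ncofactor 4 (Gs_numer ap am b c) 0 2)\<^sup>2"
    and "c\<^sup>2 * \<Delta> - N = (ncofactor 4 (Gs_numer ap am b c) 0 3)\<^sup>2"
  unfolding \<Delta>_def N_def
  by (simp_all add: ncofactor_def ndet_3 del_rc_def Gs_numer_def) algebra+

lemma Gs_cofactor_identities:
  fixes ap am b c :: real
  assumes am: "am \<noteq> 0"
    and \<Delta>: "(ap + am + b + c) * (ap + am - b - c) * (ap - am - b + c) * (ap - am + b - c) \<noteq> 0"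
  shows "let \<Delta> = (ap + am + b + c) * (ap + am - b - c) * (ap - am - b + c) * (ap - am + b - c);
             t2 = 4 * (ap * am - b * c) * (ap * b - am * c) * (ap * c - am * b) / \<Delta>;
             s = ncofactor 4 (Gs ap am b c)
         in am\<^sup>2 - t2 = am ^ 6 * (s 0 0)\<^sup>2 / \<Delta> \<and>
            ap\<^sup>2 - t2 = am ^ 6 * (s 0 1)\<^sup>2 / \<Delta> \<and>
            b\<^sup>2 - t2 = am ^ 6 * (s 0 2)\<^sup>2 / \<Delta> \<and>
            c\<^sup>2 - t2 = am ^ 6 * (s 0 3)\<^sup>2 / \<Delta>"
proof -
  define D where "D = (ap + am + b + c) * (ap + am - b - c) * (ap - am - b + c) * (ap - am + b - c)"
  define N where "N = 4 * (ap * am - b * c) * (ap * b - am * c) * (ap * c - am * b)"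
  have divided: "v\<^sup>2 - N / D = am ^ 6 * (ncofactor 4 (Gs ap am b c) 0 j)\<^sup>2 / D"
    if "j < 4" and square: "v\<^sup>2 * D - N = (ncofactor 4 (Gs_numer ap am b c) 0 j)\<^sup>2" for v j
  proof -
    have "am ^ 6 * (ncofactor 4 (Gs ap am b c) 0 j)\<^sup>2 = (am ^ 3 * ncofactor 4 (Gs ap am b c) 0 j)\<^sup>2"
      by (simp add: power_mult_distrib flip: power_mult)
    also have "\<dots> = v\<^sup>2 * D - N"
      using ncofactor_Gs[OF am \<open>j < 4\<close>] square by simp
    finally show ?thesis
      using \<Delta> by (simp add: D_def field_simps)
  qed
  show ?thesis
    using Gs_numer_cofactor_squares[where ap = ap and am = am and b = b and c = c, folded D_def N_def]
    unfolding Let_def D_def[symmetric] N_def[symmetric]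
    by (simp add: divided)
qed

lemma inner_square_less_of_independent:
  fixes u w :: "'a :: real_inner"
  assumes indep: "\<And>\<alpha> \<beta>. \<alpha> *\<^sub>R u + \<beta> *\<^sub>R w = 0 \<Longrightarrow> \<alpha> = 0 \<and> \<beta> = 0"
  shows "(u \<bullet> w)\<^sup>2 < (u \<bullet> u) * (w \<bullet> w)"
proof -
  have u: "u \<noteq> 0" using indep[of 1 0] by auto
  have "\<bar>u \<bullet> w\<bar> < norm u * norm w"
  proof (rule ccontr)
    assume "\<not> \<bar>u \<bullet> w\<bar> < norm u * norm w"
    then have "\<bar>u \<bullet> w\<bar> = norm u * norm w"
      using Cauchy_Schwarz_ineq2[of u w] by linarith
    then have "(- norm w) *\<^sub>R u + norm u *\<^sub>R w = 0 \<or> norm w *\<^sub>R u + norm u *\<^sub>R w = 0"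
      using norm_cauchy_schwarz_abs_eq[of u w] by (auto simp: algebra_simps)
    then show False using indep u by fastforce
  qed
  then have "\<bar>u \<bullet> w\<bar>\<^sup>2 < (norm u * norm w)\<^sup>2"
    by (intro power_strict_mono) auto
  then show ?thesis
    by (simp add: power_mult_distrib dot_square_norm)
qed

lemma cos_add_cos_half_angles: "cos x + cos (y :: real) = 2 * cos ((x + y) / 2) * cos ((x - y) / 2)"
  using cos_add[of "(x + y) / 2" "(x - y) / 2"] cos_diff[of "(x + y) / 2" "(x - y) / 2"]
  by (simp add: add_divide_distrib diff_divide_distrib)

lemma cos_mult_cos_half_angles:
  "cos x * cos (y :: real) = (cos ((x + y) / 2))\<^sup>2 + (cos ((x - y) / 2))\<^sup>2 - 1"
proof -
  define s d where "s = (x + y) / 2" and "d = (x - y) / 2"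
  have "cos x * cos y = cos (s + d) * cos (s - d)"
    by (simp add: s_def d_def add_divide_distrib diff_divide_distrib)
  also have "\<dots> = (cos s)\<^sup>2 * (cos d)\<^sup>2 - (sin s)\<^sup>2 * (sin d)\<^sup>2"
    by (simp add: cos_add cos_diff algebra_simps power2_eq_square)
  also have "\<dots> = (cos s)\<^sup>2 + (cos d)\<^sup>2 - 1"
    by (simp add: sin_squared_eq algebra_simps)
  finally show ?thesis by (simp add: s_def d_def)
qed

lemma cos_half_diff_eq_0_imp:
  assumes "cos ((x - y) / 2) = 0" and "0 \<le> x" "x \<le> pi" "0 \<le> y" "y \<le> pi"
  shows "(cos x)\<^sup>2 = 1"
proof -
  have "\<not> (- (pi / 2) < (x - y) / 2 \<and> (x - y) / 2 < pi / 2)"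
    using cos_gt_zero_pi[of "(x - y) / 2"] assms(1) by auto
  then have "(x = pi \<and> y = 0) \<or> (x = 0 \<and> y = pi)"
    using assms(2-) by auto
  then show ?thesis by auto
qed

lemma spherical_tetrahedron_combination_eq_0:
  assumes "spherical_tetrahedron p"
    and "a0 *\<^sub>R p 0 + a1 *\<^sub>R p 1 + a2 *\<^sub>R p 2 + a3 *\<^sub>R p 3 = 0"
  shows "a0 = 0 \<and> a1 = 0 \<and> a2 = 0 \<and> a3 = 0"
proof (rule ccontr)
  assume nonzero: "\<not> (a0 = 0 \<and> a1 = 0 \<and> a2 = 0 \<and> a3 = 0)"
  have "inj_on p {..<4}" and indep: "independent (p ` {..<4})"
    using assms(1) unfolding spherical_tetrahedron_def by auto
  then have distinct: "p 0 \<noteq> p 1" "p 0 \<noteq> p 2" "p 0 \<noteq> p 3" "p 1 \<noteq> p 2" "p 1 \<noteq> p 3" "p 2 \<noteq> p 3"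
    by (auto dest: inj_onD)
  have vertices: "p ` {..<4} = {p 0, p 1, p 2, p 3}"
    by (auto simp: numeral_eq_Suc less_Suc_eq image_def)
  define u where "u v = (if v = p 0 then a0 else if v = p 1 then a1 else if v = p 2 then a2 else a3)"
    for v
  have "(\<Sum>v\<in>{p 0, p 1, p 2, p 3}. u v *\<^sub>R v) = 0"
    using distinct assms(2) by (simp add: u_def algebra_simps)
  moreover have "\<exists>v\<in>{p 0, p 1, p 2, p 3}. u v \<noteq> 0"
    using nonzero distinct by (auto simp: u_def)
  ultimately have "dependent {p 0, p 1, p 2, p 3}"
    by (subst real_vector.dependent_finite) auto
  then show False using indep vertices by simp
qed

lemma spherical_tetrahedron_abs_inner_le_1:
  assumes "spherical_tetrahedron p" and "i < 4" and "j < 4"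
  shows "\<bar>p i \<bullet> p j\<bar> \<le> 1"
  using Cauchy_Schwarz_ineq2[of "p i" "p j"] assms unfolding spherical_tetrahedron_def by simp

lemma cos_edge_len:
  "spherical_tetrahedron p \<Longrightarrow> i < 4 \<Longrightarrow> j < 4 \<Longrightarrow> cos (edge_len p i j) = p i \<bullet> p j"
  by (simp add: edge_len_def cos_arccos_abs spherical_tetrahedron_abs_inner_le_1)

lemma edge_len_bounds:
  assumes "spherical_tetrahedron p" and "i < 4" and "j < 4"
  shows "0 \<le> edge_len p i j" and "edge_len p i j \<le> pi"
  using spherical_tetrahedron_abs_inner_le_1[OF assms]
  by (simp_all add: edge_len_def arccos_lbound arccos_ubound abs_le_iff)

text \<open>Cauchy--Schwarz for \<open>p\<^sub>0 + \<sigma>p\<^sub>1\<close> and \<open>p\<^sub>2 + \<sigma>p\<^sub>3\<close>, \<open>\<sigma> = \<plusminus>1\<close>, divided by 4.\<close>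
lemma Z2_tetrahedron_strict_Cauchy_Schwarz:
  assumes T: "spherical_tetrahedron p" and "Z2_symmetric p" and \<sigma>: "\<sigma> * \<sigma> = 1"
  shows "(p 0 \<bullet> p 2 + \<sigma> * (p 0 \<bullet> p 3))\<^sup>2 < (1 + \<sigma> * (p 0 \<bullet> p 1)) * (1 + \<sigma> * (p 2 \<bullet> p 3))"
proof -
  obtain f where f: "orthogonal_transformation f"
      "f (p 0) = p 1" "f (p 1) = p 0" "f (p 2) = p 3" "f (p 3) = p 2"
    using assms(2) unfolding Z2_symmetric_def by blast
  have "f x \<bullet> f y = x \<bullet> y" for x y using f(1) unfolding orthogonal_transformation_def by blast
  then have sym: "p 1 \<bullet> p 3 = p 0 \<bullet> p 2" "p 1 \<bullet> p 2 = p 0 \<bullet> p 3"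
    using f(2-) by metis+
  have unit: "p i \<bullet> p i = 1" if "i < 4" for i
    using T that unfolding spherical_tetrahedron_def by (simp add: dot_square_norm)
  have \<sigma>\<sigma>: "\<sigma> * (\<sigma> * x) = x" for x
    using \<sigma> by (simp flip: mult.assoc)
  have cross: "(p 0 + \<sigma> *\<^sub>R p 1) \<bullet> (p 2 + \<sigma> *\<^sub>R p 3) = 2 * (p 0 \<bullet> p 2 + \<sigma> * (p 0 \<bullet> p 3))"
    using sym by (simp add: inner_add_left inner_add_right inner_commute \<sigma>\<sigma> algebra_simps)
  have square: "(p i + \<sigma> *\<^sub>R p j) \<bullet> (p i + \<sigma> *\<^sub>R p j) = 2 * (1 + \<sigma> * (p i \<bullet> p j))"
    if "i < 4" "j < 4" for i j
    using unit that \<sigma> by (simp add: inner_add_left inner_add_right inner_commute \<sigma>\<sigma> algebra_simps)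
  have "((p 0 + \<sigma> *\<^sub>R p 1) \<bullet> (p 2 + \<sigma> *\<^sub>R p 3))\<^sup>2
      < ((p 0 + \<sigma> *\<^sub>R p 1) \<bullet> (p 0 + \<sigma> *\<^sub>R p 1)) * ((p 2 + \<sigma> *\<^sub>R p 3) \<bullet> (p 2 + \<sigma> *\<^sub>R p 3))"
  proof (rule inner_square_less_of_independent)
    fix \<alpha> \<beta> :: real
    assume "\<alpha> *\<^sub>R (p 0 + \<sigma> *\<^sub>R p 1) + \<beta> *\<^sub>R (p 2 + \<sigma> *\<^sub>R p 3) = 0"
    then have "\<alpha> *\<^sub>R p 0 + (\<alpha> * \<sigma>) *\<^sub>R p 1 + \<beta> *\<^sub>R p 2 + (\<beta> * \<sigma>) *\<^sub>R p 3 = 0"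
      by (simp add: algebra_simps)
    then show "\<alpha> = 0 \<and> \<beta> = 0"
      using spherical_tetrahedron_combination_eq_0[OF T] by blast
  qed
  also have "\<dots> = 4 * ((1 + \<sigma> * (p 0 \<bullet> p 1)) * (1 + \<sigma> * (p 2 \<bullet> p 3)))"
    using square[of 0 1] square[of 2 3] by (simp add: algebra_simps)
  finally show ?thesis
    unfolding cross by (simp only: power_mult_distrib) simp
qed

lemma Z2_tetrahedron_nondegenerate:
  assumes T: "spherical_tetrahedron p" and Z2: "Z2_symmetric p"
    and ap: "ap = cos ((edge_len p 0 1 + edge_len p 2 3) / 2)"
    and am: "am = cos ((edge_len p 0 1 - edge_len p 2 3) / 2)"
    and b: "b = cos (edge_len p 0 2)" and c: "c = cos (edge_len p 0 3)"
  shows "am \<noteq> 0"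
    and "(ap + am + b + c) * (ap + am - b - c) * (ap - am - b + c) * (ap - am + b - c) \<noteq> 0"
proof -
  have cos_A: "cos (edge_len p 0 1) = p 0 \<bullet> p 1" and cos_D: "cos (edge_len p 2 3) = p 2 \<bullet> p 3"
    using T by (simp_all add: cos_edge_len)
  have "(p 0 \<bullet> p 1)\<^sup>2 < (p 0 \<bullet> p 0) * (p 1 \<bullet> p 1)"
    by (rule inner_square_less_of_independent)
       (use spherical_tetrahedron_combination_eq_0[OF T, of _ _ 0 0] in auto)
  then have "(cos (edge_len p 0 1))\<^sup>2 \<noteq> 1"
    using T unfolding cos_A spherical_tetrahedron_def by (simp add: dot_square_norm)
  moreover have "0 \<le> edge_len p 0 1" "edge_len p 0 1 \<le> pi" "0 \<le> edge_len p 2 3" "edge_len p 2 3 \<le> pi"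
    using edge_len_bounds[OF T] by simp_all
  ultimately show "am \<noteq> 0"
    using cos_half_diff_eq_0_imp unfolding am by blast
  have factor: "(b + \<sigma> * c)\<^sup>2 \<noteq> (ap + \<sigma> * am)\<^sup>2" if \<sigma>: "\<sigma> * \<sigma> = 1" for \<sigma> :: real
  proof -
    have "(1 + \<sigma> * (p 0 \<bullet> p 1)) * (1 + \<sigma> * (p 2 \<bullet> p 3))
        = 1 + \<sigma> * (p 0 \<bullet> p 1 + p 2 \<bullet> p 3) + (p 0 \<bullet> p 1) * (p 2 \<bullet> p 3)"
      using \<sigma> by algebra
    also have "\<dots> = (ap + \<sigma> * am)\<^sup>2"
      unfolding cos_A[symmetric] cos_D[symmetric] cos_add_cos_half_angles cos_mult_cos_half_angles
        ap[symmetric] am[symmetric]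
      using \<sigma> by algebra
    finally show ?thesis
      using Z2_tetrahedron_strict_Cauchy_Schwarz[OF T Z2 \<sigma>] T b c by (simp add: cos_edge_len)
  qed
  have "(ap + am + b + c) * (ap + am - b - c) * (ap - am - b + c) * (ap - am + b - c)
      = ((ap + am)\<^sup>2 - (b + c)\<^sup>2) * ((ap - am)\<^sup>2 - (b - c)\<^sup>2)"
    by (simp add: algebra_simps power2_eq_square)
  then show "(ap + am + b + c) * (ap + am - b - c) * (ap - am - b + c) * (ap - am + b - c) \<noteq> 0"
    using factor[of 1] factor[of "-1"] by simp
qed

theorem lemma5:
  fixes p :: "nat \<Rightarrow> real^4"
  assumes "spherical_tetrahedron p" and "Z2_symmetric p"
  shows "let lA = edge_len p 0 1; lB = edge_len p 0 2; lC = edge_len p 0 3;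
             lD = edge_len p 2 3;
             ap = cos ((lA + lD) / 2); am = cos ((lA - lD) / 2);
             b = cos lB; c = cos lC;
             \<Delta> = (ap + am + b + c) * (ap + am - b - c) * (ap - am - b + c) * (ap - am + b - c);
             t2 = 4 * (ap * am - b * c) * (ap * b - am * c) * (ap * c - am * b) / \<Delta>;
             s = ncofactor 4 (Gs ap am b c)
         in am\<^sup>2 - t2 = am ^ 6 * (s 0 0)\<^sup>2 / \<Delta> \<and>
            ap\<^sup>2 - t2 = am ^ 6 * (s 0 1)\<^sup>2 / \<Delta> \<and>
            b\<^sup>2 - t2 = am ^ 6 * (s 0 2)\<^sup>2 / \<Delta> \<and>
            c\<^sup>2 - t2 = am ^ 6 * (s 0 3)\<^sup>2 / \<Delta>"
proof -
  define ap am b c where "ap = cos ((edge_len p 0 1 + edge_len p 2 3) / 2)"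
    and "am = cos ((edge_len p 0 1 - edge_len p 2 3) / 2)"
    and "b = cos (edge_len p 0 2)" and "c = cos (edge_len p 0 3)"
  from Gs_cofactor_identities[OF Z2_tetrahedron_nondegenerate[OF assms ap_def am_def b_def c_def]]
  show ?thesis
    unfolding Let_def ap_def am_def b_def c_def .
qed

end
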